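(* Let $(G,\cdot,D,\star)$ be an invariant probabilistic metric group. Then $\delta_a\odot\delta_b=\delta_{ab}$ for all $a,b\in G$.
   Context: A distribution function is a nondecreasing, left-continuous function $F:[-\infty,+\infty]\to[0,1]$ with $F(-\infty)=0$, $F(+\infty)=1$; $\Delta^+$ is the set of distribution functions with $F(0)=0$, ordered pointwise; $(\Delta^+,\le)$ is a complete lattice with maximum $\mathcal H_0$ ($\mathcal H_0(t)=0$ for $t\le0$, $1$ for $t>0$). A triangle function is a binary operation $\star$ on $\Delta^+$ that is commutative, associative, nondecreasing in each argument, with $F\star\mathcal H_0=F$. A probabilistic metric space $(G,D,\star)$ consists of a set $G$, a triangle function $\star$ and $D:G\times G\to\Delta^+$ with (i) $D(p,q)=\mathcal H_0$ iff $p=q$; (ii) $D(p,q)=D(q,p)$; (iii) $D(p,q)\star D(q,r)\le D(p,r)$. If moreover $(G,\cdot)$ is a group with identity $e$ and $D(pr,qr)=D(rp,rq)=D(p,q)$ for all $p,q,r\in G$, then $(G,\cdot,D,\star)$ is an invariant probabilistic metric group. For $a\in G$, $\delta_a:G\to\Delta^+$ is $\delta_a(y)=D(y,a)$. For maps $f,g:G\to\Delta^+$, the sup-convolution is $(f\odot g)(x)=\sup_{y,z\in G,\ yz=x}f(y)\star g(z)=\sup_{y\in G}f(y)\star g(y^{-1}x)$. *)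

theory Defs
  imports "HOL-Analysis.Analysis" "HOL-Algebra.Group"
begin

definition distribution_function :: "(ereal \<Rightarrow> real) \<Rightarrow> bool" where
  "distribution_function F \<longleftrightarrow>
     mono F \<and> (\<forall>x. continuous (at_left x) F) \<and>
     (\<forall>x. 0 \<le> F x \<and> F x \<le> 1) \<and> F (-\<infinity>) = 0 \<and> F \<infinity> = 1"

definition Delta_plus :: "(ereal \<Rightarrow> real) set" where
  "Delta_plus = {F. distribution_function F \<and> F 0 = 0}"

definition H0 :: "ereal \<Rightarrow> real" where
  "H0 t = (if t \<le> 0 then 0 else 1)"

definition Delta_Sup :: "(ereal \<Rightarrow> real) set \<Rightarrow> (ereal \<Rightarrow> real)" where
  "Delta_Sup S = (THE U. U \<in> Delta_plus \<and> (\<forall>F\<in>S. F \<le> U) \<and>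
                      (\<forall>V\<in>Delta_plus. (\<forall>F\<in>S. F \<le> V) \<longrightarrow> U \<le> V))"

definition triangle_function ::
  "((ereal \<Rightarrow> real) \<Rightarrow> (ereal \<Rightarrow> real) \<Rightarrow> (ereal \<Rightarrow> real)) \<Rightarrow> bool" where
  "triangle_function T \<longleftrightarrow>
     (\<forall>F\<in>Delta_plus. \<forall>G\<in>Delta_plus. T F G \<in> Delta_plus) \<and>
     (\<forall>F\<in>Delta_plus. \<forall>G\<in>Delta_plus. T F G = T G F) \<and>
     (\<forall>F\<in>Delta_plus. \<forall>G\<in>Delta_plus. \<forall>H\<in>Delta_plus. T (T F G) H = T F (T G H)) \<and>
     (\<forall>F\<in>Delta_plus. \<forall>G\<in>Delta_plus. \<forall>H\<in>Delta_plus. F \<le> G \<longrightarrow> T F H \<le> T G H) \<and>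
     (\<forall>F\<in>Delta_plus. \<forall>G\<in>Delta_plus. \<forall>H\<in>Delta_plus. F \<le> G \<longrightarrow> T H F \<le> T H G) \<and>
     (\<forall>F\<in>Delta_plus. T F H0 = F)"

definition pm_space ::
  "'a set \<Rightarrow> ('a \<Rightarrow> 'a \<Rightarrow> (ereal \<Rightarrow> real)) \<Rightarrow>
   ((ereal \<Rightarrow> real) \<Rightarrow> (ereal \<Rightarrow> real) \<Rightarrow> (ereal \<Rightarrow> real)) \<Rightarrow> bool" where
  "pm_space S D T \<longleftrightarrow>
     triangle_function T \<and>
     (\<forall>p\<in>S. \<forall>q\<in>S. D p q \<in> Delta_plus) \<and>
     (\<forall>p\<in>S. \<forall>q\<in>S. D p q = H0 \<longleftrightarrow> p = q) \<and>
     (\<forall>p\<in>S. \<forall>q\<in>S. D p q = D q p) \<and>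
     (\<forall>p\<in>S. \<forall>q\<in>S. \<forall>r\<in>S. T (D p q) (D q r) \<le> D p r)"

definition invariant_pm_group ::
  "('a, 'b) monoid_scheme \<Rightarrow> ('a \<Rightarrow> 'a \<Rightarrow> (ereal \<Rightarrow> real)) \<Rightarrow>
   ((ereal \<Rightarrow> real) \<Rightarrow> (ereal \<Rightarrow> real) \<Rightarrow> (ereal \<Rightarrow> real)) \<Rightarrow> bool" where
  "invariant_pm_group G D T \<longleftrightarrow>
     group G \<and> pm_space (carrier G) D T \<and>
     (\<forall>p\<in>carrier G. \<forall>q\<in>carrier G. \<forall>r\<in>carrier G.
        D (p \<otimes>\<^bsub>G\<^esub> r) (q \<otimes>\<^bsub>G\<^esub> r) = D p q \<and> D (r \<otimes>\<^bsub>G\<^esub> p) (r \<otimes>\<^bsub>G\<^esub> q) = D p q)"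

definition delta :: "('a \<Rightarrow> 'a \<Rightarrow> (ereal \<Rightarrow> real)) \<Rightarrow> 'a \<Rightarrow> 'a \<Rightarrow> (ereal \<Rightarrow> real)" where
  "delta D a = (\<lambda>y. D y a)"

definition sup_conv ::
  "('a, 'b) monoid_scheme \<Rightarrow>
   ((ereal \<Rightarrow> real) \<Rightarrow> (ereal \<Rightarrow> real) \<Rightarrow> (ereal \<Rightarrow> real)) \<Rightarrow>
   ('a \<Rightarrow> (ereal \<Rightarrow> real)) \<Rightarrow> ('a \<Rightarrow> (ereal \<Rightarrow> real)) \<Rightarrow> 'a \<Rightarrow> (ereal \<Rightarrow> real)" where
  "sup_conv G T f g x = Delta_Sup {T (f y) (g z) | y z.
      y \<in> carrier G \<and> z \<in> carrier G \<and> y \<otimes>\<^bsub>G\<^esub> z = x}"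

end

theory Submission
  imports Defs
begin

text \<open>By invariance, a term \<open>D y a \<star> D z b\<close> with \<open>y z = x\<close> equals \<open>D x (a z) \<star> D (a z) (a b)\<close>,
  so the triangle inequality bounds it by \<open>D x (a b)\<close>. The choice \<open>z = b\<close> attains this bound,
  because \<open>D b b = H0\<close> is the unit of \<open>\<star>\<close>; hence the supremum is a maximum.\<close>

lemma Delta_Sup_eq_maximum:
  assumes "M \<in> Delta_plus" and "M \<in> S" and "\<forall>F\<in>S. F \<le> M"
  shows "Delta_Sup S = M"
  unfolding Delta_Sup_def
proof (rule the_equality)
  show "M \<in> Delta_plus \<and> (\<forall>F\<in>S. F \<le> M) \<and> (\<forall>V\<in>Delta_plus. (\<forall>F\<in>S. F \<le> V) \<longrightarrow> M \<le> V)"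
    using assms by blast
next
  fix U
  assume "U \<in> Delta_plus \<and> (\<forall>F\<in>S. F \<le> U) \<and> (\<forall>V\<in>Delta_plus. (\<forall>F\<in>S. F \<le> V) \<longrightarrow> U \<le> V)"
  then have "M \<le> U" and "U \<le> M" using assms by auto
  then show "U = M" by (rule order.antisym[rotated])
qed

context
  fixes G :: "('a, 'b) monoid_scheme"
    and D :: "'a \<Rightarrow> 'a \<Rightarrow> (ereal \<Rightarrow> real)"
    and T :: "(ereal \<Rightarrow> real) \<Rightarrow> (ereal \<Rightarrow> real) \<Rightarrow> (ereal \<Rightarrow> real)"
  assumes ipg: "invariant_pm_group G D T"
begin

interpretation group G
  using ipg unfolding invariant_pm_group_def by auto

lemma pm_space_carrier: "pm_space (carrier G) D T"
  using ipg unfolding invariant_pm_group_def by auto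

lemma dist_in_Delta_plus: "\<lbrakk>p \<in> carrier G; q \<in> carrier G\<rbrakk> \<Longrightarrow> D p q \<in> Delta_plus"
  using pm_space_carrier unfolding pm_space_def by auto

lemma dist_self: "p \<in> carrier G \<Longrightarrow> D p p = H0"
  using pm_space_carrier unfolding pm_space_def by auto

lemma dist_triangle:
  "\<lbrakk>p \<in> carrier G; q \<in> carrier G; r \<in> carrier G\<rbrakk> \<Longrightarrow> T (D p q) (D q r) \<le> D p r"
  using pm_space_carrier unfolding pm_space_def by auto

lemma triangle_function_H0_right: "F \<in> Delta_plus \<Longrightarrow> T F H0 = F"
  using pm_space_carrier unfolding pm_space_def triangle_function_def by auto

lemma dist_mult_right:
  "\<lbrakk>p \<in> carrier G; q \<in> carrier G; r \<in> carrier G\<rbrakk> \<Longrightarrow> D (p \<otimes>\<^bsub>G\<^esub> r) (q \<otimes>\<^bsub>G\<^esub> r) = D p q"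
  using ipg unfolding invariant_pm_group_def by auto

lemma dist_mult_left:
  "\<lbrakk>p \<in> carrier G; q \<in> carrier G; r \<in> carrier G\<rbrakk> \<Longrightarrow> D (r \<otimes>\<^bsub>G\<^esub> p) (r \<otimes>\<^bsub>G\<^esub> q) = D p q"
  using ipg unfolding invariant_pm_group_def by auto

lemma triangle_function_dist_mult_le:
  assumes "y \<in> carrier G" "z \<in> carrier G" "a \<in> carrier G" "b \<in> carrier G"
  shows "T (D y a) (D z b) \<le> D (y \<otimes>\<^bsub>G\<^esub> z) (a \<otimes>\<^bsub>G\<^esub> b)"
proof -
  have "D y a = D (y \<otimes>\<^bsub>G\<^esub> z) (a \<otimes>\<^bsub>G\<^esub> z)" using dist_mult_right[OF assms(1,3,2)] by simp
  moreover have "D z b = D (a \<otimes>\<^bsub>G\<^esub> z) (a \<otimes>\<^bsub>G\<^esub> b)" using dist_mult_left[OF assms(2,4,3)] by simp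
  moreover have "T (D (y \<otimes>\<^bsub>G\<^esub> z) (a \<otimes>\<^bsub>G\<^esub> z)) (D (a \<otimes>\<^bsub>G\<^esub> z) (a \<otimes>\<^bsub>G\<^esub> b))
      \<le> D (y \<otimes>\<^bsub>G\<^esub> z) (a \<otimes>\<^bsub>G\<^esub> b)"
    using assms by (intro dist_triangle) auto
  ultimately show ?thesis by simp
qed

lemma triangle_function_dist_mult_attained:
  assumes "x \<in> carrier G" "a \<in> carrier G" "b \<in> carrier G"
  shows "T (D (x \<otimes>\<^bsub>G\<^esub> inv\<^bsub>G\<^esub> b) a) (D b b) = D x (a \<otimes>\<^bsub>G\<^esub> b)"
proof -
  have "D (x \<otimes>\<^bsub>G\<^esub> inv\<^bsub>G\<^esub> b) a = D x (a \<otimes>\<^bsub>G\<^esub> b)"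
    using dist_mult_right[of "x \<otimes>\<^bsub>G\<^esub> inv\<^bsub>G\<^esub> b" a b] assms by (simp add: m_assoc)
  moreover have "D x (a \<otimes>\<^bsub>G\<^esub> b) \<in> Delta_plus"
    using assms by (intro dist_in_Delta_plus) auto
  ultimately show ?thesis
    using dist_self[OF assms(3)] triangle_function_H0_right by simp
qed

end

theorem proposition10:
  fixes G :: "('a, 'b) monoid_scheme"
    and D :: "'a \<Rightarrow> 'a \<Rightarrow> (ereal \<Rightarrow> real)"
    and T :: "(ereal \<Rightarrow> real) \<Rightarrow> (ereal \<Rightarrow> real) \<Rightarrow> (ereal \<Rightarrow> real)"
  assumes "invariant_pm_group G D T"
    and "a \<in> carrier G" and "b \<in> carrier G"
  shows "\<forall>x\<in>carrier G. sup_conv G T (delta D a) (delta D b) x = delta D (a \<otimes>\<^bsub>G\<^esub> b) x"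
proof
  fix x assume x: "x \<in> carrier G"
  interpret group G using assms(1) unfolding invariant_pm_group_def by blast
  let ?S = "{T (D y a) (D z b) | y z. y \<in> carrier G \<and> z \<in> carrier G \<and> y \<otimes>\<^bsub>G\<^esub> z = x}"
  have "D x (a \<otimes>\<^bsub>G\<^esub> b) \<in> Delta_plus"
    using dist_in_Delta_plus[OF assms(1)] x assms by simp
  moreover have "D x (a \<otimes>\<^bsub>G\<^esub> b) \<in> ?S"
  proof -
    have "x \<otimes>\<^bsub>G\<^esub> inv\<^bsub>G\<^esub> b \<in> carrier G" and "x \<otimes>\<^bsub>G\<^esub> inv\<^bsub>G\<^esub> b \<otimes>\<^bsub>G\<^esub> b = x"
      using x assms(3) by (simp_all add: m_assoc)
    with assms(3) show ?thesis
      unfolding triangle_function_dist_mult_attained[OF assms(1) x assms(2,3), symmetric] by blast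
  qed
  moreover have "\<forall>F\<in>?S. F \<le> D x (a \<otimes>\<^bsub>G\<^esub> b)"
  proof
    fix F assume "F \<in> ?S"
    then obtain y z where y: "y \<in> carrier G" and z: "z \<in> carrier G"
      and yz: "y \<otimes>\<^bsub>G\<^esub> z = x" and F: "F = T (D y a) (D z b)" by blast
    show "F \<le> D x (a \<otimes>\<^bsub>G\<^esub> b)"
      using triangle_function_dist_mult_le[OF assms(1) y z assms(2,3)] unfolding F yz .
  qed
  ultimately have "Delta_Sup ?S = D x (a \<otimes>\<^bsub>G\<^esub> b)" by (rule Delta_Sup_eq_maximum)
  then show "sup_conv G T (delta D a) (delta D b) x = delta D (a \<otimes>\<^bsub>G\<^esub> b) x"
    unfolding sup_conv_def delta_def by simp
qed

end
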